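(* Let $R$ be a Noetherian ring and $\phi$ an $m\times s$ matrix with entries in $R$. Suppose $I_1(\phi)\subseteq(a_1,\dots,a_r)$ and $a_1,\dots,a_r$ is an $R$-regular sequence. Then for every $i\ge1$, the ideal $\mathcal L+I_r(B_i(\phi))$ of $R[T_1,\dots,T_m]$ does not depend on the choices made in the construction of the $i$-th iterated Jacobian dual $B_i(\phi)$; i.e., it is uniquely determined by $\phi$ and $a_1,\dots,a_r$.
   Context: Grade $R[T_1,\dots,T_m]$ by $\deg T_j=1$, $\deg R=0$. $\mathcal L$ is the ideal generated by the entries of $[T_1\cdots T_m]\cdot\phi$. For a matrix $M$ with $r$ rows, $(\underline a\cdot M)$ denotes the ideal generated by the entries of $[a_1\cdots a_r]\cdot M$, and $I_r(M)$ its ideal of $r\times r$ minors. Iterated Jacobian duals: $B_1(\phi)$ is any $r\times s$ matrix with entries linear forms in $T_1,\dots,T_m$ with coefficients in $R$ such that $[T_1\cdots T_m]\cdot\phi=[a_1\cdots a_r]\cdot B_1(\phi)$; set $\mathcal L_1=\mathcal L$. Given $B_{i-1}(\phi)$ (with $r$ rows, entries homogeneous of constant degree along each column) and $\mathcal L_{i-1}=(\underline a\cdot B_{i-1}(\phi))$, choose homogeneous $u_1,\dots,u_l$ with $\mathcal L_{i-1}+(I_r(B_{i-1}(\phi))\cap(a_1,\dots,a_r))=\mathcal L_{i-1}+(u_1,\dots,u_l)$, choose a matrix $C$ with homogeneous entries of constant degree along each column with $[u_1\cdots u_l]=[a_1\cdots a_r]\cdot C$, and set $B_i(\phi)=[B_{i-1}(\phi)\,|\,C]$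 (concatenation) and $\mathcal L_i=(\underline a\cdot B_i(\phi))$. *)

theory Defs
  imports Main "HOL-Library.Poly_Mapping" "HOL-Combinatorics.Permutations"
begin

definition is_ideal :: "'a::comm_ring_1 set \<Rightarrow> bool" where
  "is_ideal I \<longleftrightarrow> 0 \<in> I \<and> (\<forall>x\<in>I. \<forall>y\<in>I. x + y \<in> I) \<and> (\<forall>x\<in>I. \<forall>c. c * x \<in> I)"

definition ideal_gen :: "'a::comm_ring_1 set \<Rightarrow> 'a set" where
  "ideal_gen S = {x. \<exists>F c. finite F \<and> F \<subseteq> S \<and> x = (\<Sum>g\<in>F. c g * g)}"

definition noetherian_ring :: "'a::comm_ring_1 itself \<Rightarrow> bool" where
  "noetherian_ring _ \<longleftrightarrow> (\<forall>I::'a set. is_ideal I \<longrightarrow> (\<exists>F. finite F \<and> I = ideal_gen F))"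

definition regular_sequence :: "(nat \<Rightarrow> 'a::comm_ring_1) \<Rightarrow> nat \<Rightarrow> bool" where
  "regular_sequence a r \<longleftrightarrow>
     (\<forall>i<r. \<forall>x. a i * x \<in> ideal_gen (a ` {..<i}) \<longrightarrow> x \<in> ideal_gen (a ` {..<i}))
     \<and> ideal_gen (a ` {..<r}) \<noteq> UNIV"

type_synonym ('v, 'a) mpoly = "('v \<Rightarrow>\<^sub>0 nat) \<Rightarrow>\<^sub>0 'a"

definition const :: "'a::comm_ring_1 \<Rightarrow> ('v, 'a) mpoly" where
  "const c = Poly_Mapping.single 0 c"

definition var :: "'v \<Rightarrow> ('v, 'a::comm_ring_1) mpoly" where
  "var v = Poly_Mapping.single (Poly_Mapping.single v 1) 1"

definition mdeg :: "('v::finite \<Rightarrow>\<^sub>0 nat) \<Rightarrow> nat" where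
  "mdeg \<mu> = (\<Sum>v\<in>UNIV. Poly_Mapping.lookup \<mu> v)"

text \<open>p is homogeneous of degree d (deg T_v = 1, deg R = 0); 0 is homogeneous of every degree.\<close>
definition homogeneous :: "('v::finite, 'a::comm_ring_1) mpoly \<Rightarrow> nat \<Rightarrow> bool" where
  "homogeneous p d \<longleftrightarrow> (\<forall>\<mu>\<in>Poly_Mapping.keys p. mdeg \<mu> = d)"

definition det_n :: "nat \<Rightarrow> (nat \<Rightarrow> nat \<Rightarrow> 'b::comm_ring_1) \<Rightarrow> 'b" where
  "det_n n M = (\<Sum>p | p permutes {..<n}. of_int (sign p) * (\<Prod>i<n. M i (p i)))"

text \<open>I_r(M) for a matrix M with r rows and n columns: ideal generated by all r x r minors
  (column selections c; non-injective selections only contribute 0).\<close>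
definition minors_ideal :: "nat \<Rightarrow> (nat \<Rightarrow> nat \<Rightarrow> 'b::comm_ring_1) \<Rightarrow> nat \<Rightarrow> 'b set" where
  "minors_ideal r M n = ideal_gen {det_n r (\<lambda>i k. M i (c k)) | c. c ` {..<r} \<subseteq> {..<n}}"

definition ideal_a :: "(nat \<Rightarrow> 'a::comm_ring_1) \<Rightarrow> nat \<Rightarrow> ('v, 'a) mpoly set" where
  "ideal_a a r = ideal_gen ((\<lambda>i. const (a i)) ` {..<r})"

definition a_times :: "(nat \<Rightarrow> 'a::comm_ring_1) \<Rightarrow> nat \<Rightarrow> (nat \<Rightarrow> nat \<Rightarrow> ('v, 'a) mpoly) \<Rightarrow> nat \<Rightarrow> ('v, 'a) mpoly"
  where "a_times a r M k = (\<Sum>i<r. const (a i) * M i k)"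

definition a_ideal :: "(nat \<Rightarrow> 'a::comm_ring_1) \<Rightarrow> nat \<Rightarrow> (nat \<Rightarrow> nat \<Rightarrow> ('v, 'a) mpoly) \<Rightarrow> nat \<Rightarrow> ('v, 'a) mpoly set"
  where "a_ideal a r M n = ideal_gen (a_times a r M ` {..<n})"

text \<open>The ideal L generated by the entries of [T_1 ... T_m] . phi (phi is m x s, rows indexed by 'v).\<close>
definition L_ideal :: "('v::finite \<Rightarrow> nat \<Rightarrow> 'a::comm_ring_1) \<Rightarrow> nat \<Rightarrow> ('v, 'a) mpoly set" where
  "L_ideal \<phi> s = ideal_gen ((\<lambda>k. \<Sum>v\<in>UNIV. var v * const (\<phi> v k)) ` {..<s})"

text \<open>One step of the construction: M' (with n' columns) is [M | C], where C occupies columns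
  n..n'-1, each column of C has homogeneous entries of a common degree, the entries u_k of
  [a].C are homogeneous, and L_{i-1} + (I_r(M) \<inter> (a)) = L_{i-1} + (u).\<close>
definition jd_step :: "(nat \<Rightarrow> 'a::comm_ring_1) \<Rightarrow> nat \<Rightarrow> (nat \<Rightarrow> nat \<Rightarrow> ('v::finite, 'a) mpoly) \<Rightarrow> nat
                        \<Rightarrow> (nat \<Rightarrow> nat \<Rightarrow> ('v, 'a) mpoly) \<Rightarrow> nat \<Rightarrow> bool" where
  "jd_step a r M n M' n' \<longleftrightarrow>
     n \<le> n' \<and>
     (\<forall>i<r. \<forall>k<n. M' i k = M i k) \<and>
     (\<forall>k\<in>{n..<n'}. \<exists>d. (\<forall>i<r. homogeneous (M' i k) d)) \<and>
     (\<forall>k\<in>{n..<n'}. \<exists>d. homogeneous (a_times a r M' k) d) \<and>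
     ideal_gen (a_ideal a r M n \<union> (minors_ideal r M n \<inter> ideal_a a r))
       = ideal_gen (a_ideal a r M n \<union> a_times a r M' ` {n..<n'})"

definition jd_first :: "('v::finite \<Rightarrow> nat \<Rightarrow> 'a::comm_ring_1) \<Rightarrow> nat \<Rightarrow> (nat \<Rightarrow> 'a) \<Rightarrow> nat
                         \<Rightarrow> (nat \<Rightarrow> nat \<Rightarrow> ('v, 'a) mpoly) \<Rightarrow> bool" where
  "jd_first \<phi> s a r B \<longleftrightarrow>
     (\<forall>i<r. \<forall>k<s. homogeneous (B i k) 1) \<and>
     (\<forall>k<s. (\<Sum>v\<in>UNIV. var v * const (\<phi> v k)) = a_times a r B k)"

text \<open>iterated_jd phi s a r i B n: B (with r rows and n columns) is a possible choice of the
  i-th iterated Jacobian dual B_i(phi).\<close>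
inductive iterated_jd :: "('v::finite \<Rightarrow> nat \<Rightarrow> 'a::comm_ring_1) \<Rightarrow> nat \<Rightarrow> (nat \<Rightarrow> 'a) \<Rightarrow> nat
                          \<Rightarrow> nat \<Rightarrow> (nat \<Rightarrow> nat \<Rightarrow> ('v, 'a) mpoly) \<Rightarrow> nat \<Rightarrow> bool"
  for \<phi> s a r where
  first: "jd_first \<phi> s a r B \<Longrightarrow> iterated_jd \<phi> s a r 1 B s"
| step: "iterated_jd \<phi> s a r i B n \<Longrightarrow> jd_step a r B n B' n' \<Longrightarrow> iterated_jd \<phi> s a r (Suc i) B' n'"

end

theory Submission
  imports Defs "Jordan_Normal_Form.Determinant"
begin

text \<open>Write \<open>\<L>\<^sub>i = (a \<cdot> B\<^sub>i)\<close>. The heart of the argument is a statement about minors: if \<open>\<alpha>\<close> is a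
  regular sequence and every entry of \<open>\<alpha> \<cdot> M'\<close> lies in \<open>(\<alpha> \<cdot> M)\<close>, then
  \<open>I\<^sub>r(M') \<subseteq> (\<alpha> \<cdot> M) + I\<^sub>r(M)\<close>. It is proved by exchanging the columns of an \<open>r \<times> r\<close> submatrix
  of \<open>M'\<close> one at a time for columns of \<open>M\<close>; each exchange leaves an error term which is the
  determinant of a matrix having a syzygy of \<open>\<alpha>\<close> as one column, and since syzygies of a regular
  sequence are Koszul, Cramer's rule puts that determinant into \<open>(\<alpha> \<cdot> M)\<close>.

  Hence \<open>\<L>\<^sub>i + I\<^sub>r(B\<^sub>i)\<close> depends only on \<open>\<L>\<^sub>i\<close>, and by the modular law
  \<open>\<L>\<^sub>i\<^sub>+\<^sub>1 = (\<L>\<^sub>i + I\<^sub>r(B\<^sub>i)) \<inter> (a)\<close>; by induction each \<open>\<L>\<^sub>i\<close>, and so each \<open>\<L>\<^sub>i + I\<^sub>r(B\<^sub>i)\<close>, is independent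
  of the choices. Finally \<open>\<L> \<subseteq> \<L>\<^sub>i \<subseteq> \<L> + I\<^sub>r(B\<^sub>i)\<close>, so \<open>\<L> + I\<^sub>r(B\<^sub>i) = \<L>\<^sub>i + I\<^sub>r(B\<^sub>i)\<close>.\<close>

lemma ideal_gen_zero: "0 \<in> ideal_gen S"
  unfolding ideal_gen_def by (rule CollectI, rule exI[of _ "{}"]) auto

lemma generator_in_ideal_gen: "x \<in> S \<Longrightarrow> x \<in> ideal_gen S"
  unfolding ideal_gen_def by (rule CollectI, rule exI[of _ "{x}"], rule exI[of _ "\<lambda>_. 1"]) auto

lemma ideal_gen_add:
  assumes "x \<in> ideal_gen S" "y \<in> ideal_gen S"
  shows "x + y \<in> ideal_gen S"
proof -
  obtain F c where F: "finite F" "F \<subseteq> S" "x = (\<Sum>g\<in>F. c g * g)"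
    using assms(1) unfolding ideal_gen_def by blast
  obtain G d where G: "finite G" "G \<subseteq> S" "y = (\<Sum>g\<in>G. d g * g)"
    using assms(2) unfolding ideal_gen_def by blast
  have extend: "(\<Sum>g\<in>H. e g * g) = (\<Sum>g\<in>F \<union> G. (if g \<in> H then e g else 0) * g)"
    if "H \<subseteq> F \<union> G" for H e
    by (rule sum.mono_neutral_cong_left) (use F G that in auto)
  have "x + y = (\<Sum>g\<in>F \<union> G. ((if g \<in> F then c g else 0) + (if g \<in> G then d g else 0)) * g)"
    using extend[of F c] extend[of G d] F(3) G(3) by (simp add: sum.distrib distrib_right)
  then show ?thesis
    unfolding ideal_gen_def using F G by (intro CollectI exI[of _ "F \<union> G"] exI conjI) auto
qed

lemma ideal_gen_mult:
  assumes "x \<in> ideal_gen S"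
  shows "c * x \<in> ideal_gen S"
proof -
  obtain F d where F: "finite F" "F \<subseteq> S" "x = (\<Sum>g\<in>F. d g * g)"
    using assms unfolding ideal_gen_def by blast
  have "c * x = (\<Sum>g\<in>F. (c * d g) * g)"
    using F by (simp add: sum_distrib_left mult.assoc)
  then show ?thesis
    unfolding ideal_gen_def using F by (intro CollectI exI[of _ F] exI conjI) auto
qed

lemma ideal_gen_is_ideal: "is_ideal (ideal_gen S)"
  unfolding is_ideal_def using ideal_gen_zero ideal_gen_add ideal_gen_mult by blast

lemma is_idealD:
  assumes "is_ideal I"
  shows "0 \<in> I" and "x \<in> I \<Longrightarrow> y \<in> I \<Longrightarrow> x + y \<in> I" and "x \<in> I \<Longrightarrow> c * x \<in> I"
  using assms unfolding is_ideal_def by auto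

lemma ideal_mult_right: "is_ideal I \<Longrightarrow> x \<in> I \<Longrightarrow> x * c \<in> I"
  by (metis is_idealD(3) mult.commute)

lemma ideal_diff: "is_ideal I \<Longrightarrow> x \<in> I \<Longrightarrow> y \<in> I \<Longrightarrow> x - y \<in> I"
  using is_idealD(2,3)[of I x "-1 * y"] is_idealD(3)[of I y "-1"] by simp

lemma ideal_sum: "is_ideal I \<Longrightarrow> (\<And>x. x \<in> A \<Longrightarrow> f x \<in> I) \<Longrightarrow> sum f A \<in> I"
  by (induction A rule: infinite_finite_induct) (auto intro: is_idealD)

lemma ideal_gen_least:
  assumes "is_ideal I" "S \<subseteq> I"
  shows "ideal_gen S \<subseteq> I"
proof
  fix x assume "x \<in> ideal_gen S"
  then obtain F c where "finite F" "F \<subseteq> S" "x = (\<Sum>g\<in>F. c g * g)"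
    unfolding ideal_gen_def by blast
  then show "x \<in> I"
    using assms by (auto intro!: ideal_sum is_idealD(3))
qed

lemma ideal_gen_mono: "S \<subseteq> T \<Longrightarrow> ideal_gen S \<subseteq> ideal_gen T"
  by (meson generator_in_ideal_gen ideal_gen_is_ideal ideal_gen_least subset_iff)

lemma ideal_gen_Un_ideal_gen: "ideal_gen (ideal_gen A \<union> B) = ideal_gen (A \<union> B)"
proof
  show "ideal_gen (ideal_gen A \<union> B) \<subseteq> ideal_gen (A \<union> B)"
    using ideal_gen_mono[of A "A \<union> B"]
    by (intro ideal_gen_least ideal_gen_is_ideal) (auto intro: generator_in_ideal_gen)
  show "ideal_gen (A \<union> B) \<subseteq> ideal_gen (ideal_gen A \<union> B)"
    by (rule ideal_gen_mono) (auto intro: generator_in_ideal_gen)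
qed

lemma ideal_gen_image_lessThan:
  "ideal_gen (f ` {..<(q::nat)}) = {x. \<exists>h. x = (\<Sum>m<q. f m * h m)}"
    (is "_ = ?I")
proof
  have "is_ideal ?I"
    unfolding is_ideal_def
  proof (intro conjI ballI allI)
    show "0 \<in> ?I"
      by (rule CollectI, rule exI[of _ "\<lambda>_. 0"]) simp
  next
    fix x y assume "x \<in> ?I" "y \<in> ?I"
    then obtain h k where "x = (\<Sum>m<q. f m * h m)" "y = (\<Sum>m<q. f m * k m)" by blast
    then have "x + y = (\<Sum>m<q. f m * (h m + k m))"
      by (simp add: sum.distrib distrib_left)
    then show "x + y \<in> ?I" by (intro CollectI exI)
  next
    fix x c assume "x \<in> ?I"
    then obtain h where "x = (\<Sum>m<q. f m * h m)" by blast
    then have "c * x = (\<Sum>m<q. f m * (c * h m))"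
      by (simp add: sum_distrib_left algebra_simps)
    then show "c * x \<in> ?I" by (intro CollectI exI)
  qed
  moreover have "f j \<in> ?I" if "j < q" for j
  proof -
    have "(\<Sum>m<q. f m * (if m = j then 1 else 0)) = (\<Sum>m<q. if m = j then f j else 0)"
      by (rule sum.cong) auto
    also have "\<dots> = f j"
      using that by simp
    finally show ?thesis
      by (intro CollectI exI[of _ "\<lambda>m. if m = j then 1 else 0"]) simp
  qed
  ultimately show "ideal_gen (f ` {..<q}) \<subseteq> ?I"
    by (intro ideal_gen_least) auto
  show "?I \<subseteq> ideal_gen (f ` {..<q})"
  proof
    fix x assume "x \<in> ?I"
    then obtain h where h: "x = (\<Sum>m<q. f m * h m)" by blast
    show "x \<in> ideal_gen (f ` {..<q})"
      unfolding h by (intro ideal_sum[OF ideal_gen_is_ideal] ideal_mult_right[OF ideal_gen_is_ideal]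
          generator_in_ideal_gen) auto
  qed
qed

lemma ideal_gen_Un_ideals:
  assumes P: "is_ideal P" and Q: "is_ideal Q"
  shows "ideal_gen (P \<union> Q) = {p + q |p q. p \<in> P \<and> q \<in> Q}"
    (is "_ = ?S")
proof
  have "is_ideal ?S"
    unfolding is_ideal_def
  proof (intro conjI ballI allI)
    show "0 \<in> ?S"
      using P Q is_idealD(1) by force
  next
    fix x y assume "x \<in> ?S" "y \<in> ?S"
    then obtain p q p' q' where "x = p + q" "y = p' + q'" "p \<in> P" "q \<in> Q" "p' \<in> P" "q' \<in> Q"
      by blast
    moreover have "x + y = (p + p') + (q + q')"
      using calculation by (simp add: algebra_simps)
    ultimately show "x + y \<in> ?S"
      using is_idealD(2)[OF P] is_idealD(2)[OF Q] by blast
  next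
    fix x c assume "x \<in> ?S"
    then obtain p q where "x = p + q" "p \<in> P" "q \<in> Q"
      by blast
    moreover have "c * x = c * p + c * q"
      using calculation by (simp add: algebra_simps)
    ultimately show "c * x \<in> ?S"
      using is_idealD(3)[OF P] is_idealD(3)[OF Q] by blast
  qed
  moreover have "P \<union> Q \<subseteq> ?S"
    using is_idealD(1)[OF P] is_idealD(1)[OF Q] by force
  ultimately show "ideal_gen (P \<union> Q) \<subseteq> ?S"
    by (rule ideal_gen_least)
  show "?S \<subseteq> ideal_gen (P \<union> Q)"
    by (blast intro: ideal_gen_add generator_in_ideal_gen)
qed

lemma ideal_gen_Un_Int_modular:
  assumes P: "is_ideal P" and Q: "is_ideal Q" and A: "is_ideal A" and "P \<subseteq> A"
  shows "ideal_gen (P \<union> Q) \<inter> A = ideal_gen (P \<union> (Q \<inter> A))"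
proof
  show "ideal_gen (P \<union> Q) \<inter> A \<subseteq> ideal_gen (P \<union> (Q \<inter> A))"
  proof
    fix x assume x: "x \<in> ideal_gen (P \<union> Q) \<inter> A"
    then obtain p q where pq: "x = p + q" "p \<in> P" "q \<in> Q"
      unfolding ideal_gen_Un_ideals[OF P Q] by blast
    then have "q \<in> A"
      using x \<open>P \<subseteq> A\<close> ideal_diff[OF A, of x p] by auto
    then show "x \<in> ideal_gen (P \<union> (Q \<inter> A))"
      using pq by (auto intro: ideal_gen_add generator_in_ideal_gen)
  qed
  show "ideal_gen (P \<union> (Q \<inter> A)) \<subseteq> ideal_gen (P \<union> Q) \<inter> A"
    using ideal_gen_mono[of "P \<union> (Q \<inter> A)" "P \<union> Q"] ideal_gen_least[OF A, of "P \<union> (Q \<inter> A)"] \<open>P \<subseteq> A\<close>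
    by auto
qed

definition mat_of_fun :: "nat \<Rightarrow> (nat \<Rightarrow> nat \<Rightarrow> 'b::comm_ring_1) \<Rightarrow> 'b mat" where
  "mat_of_fun r X = mat r r (\<lambda>(i, j). X i j)"

definition replace_col :: "(nat \<Rightarrow> nat \<Rightarrow> 'b) \<Rightarrow> nat \<Rightarrow> (nat \<Rightarrow> 'b) \<Rightarrow> nat \<Rightarrow> nat \<Rightarrow> 'b" where
  "replace_col X p u = (\<lambda>i k. if k = p then u i else X i k)"

definition vec_mat :: "(nat \<Rightarrow> 'b::comm_ring_1) \<Rightarrow> nat \<Rightarrow> (nat \<Rightarrow> nat \<Rightarrow> 'b) \<Rightarrow> nat \<Rightarrow> 'b" where
  "vec_mat \<alpha> r X k = (\<Sum>i<r. \<alpha> i * X i k)"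

lemma mat_of_fun_carrier: "mat_of_fun r X \<in> carrier_mat r r"
  unfolding mat_of_fun_def by simp

lemma det_n_eq_det: "det_n r X = det (mat_of_fun r X)"
  unfolding det_n_def det_def mat_of_fun_def
  by (auto simp: atLeast0LessThan permutes_in_image intro!: sum.cong prod.cong)

lemma det_n_cong:
  assumes "\<And>i k. i < r \<Longrightarrow> k < r \<Longrightarrow> X i k = Y i k"
  shows "det_n r X = det_n r Y"
  unfolding det_n_eq_det mat_of_fun_def using assms
  by (metis (no_types, lifting) case_prod_conv cong_mat)

lemma replace_col_self: "replace_col X p (\<lambda>i. X i p) = X"
  unfolding replace_col_def by (auto simp: fun_eq_iff)

lemma vec_mat_replace_col:
  "vec_mat \<alpha> r (replace_col X p u) k = (if k = p then (\<Sum>i<r. \<alpha> i * u i) else vec_mat \<alpha> r X k)"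
  unfolding vec_mat_def replace_col_def by simp

lemma cofactor_replace_col:
  "p < r \<Longrightarrow> cofactor (mat_of_fun r (replace_col X p u)) l p = cofactor (mat_of_fun r X) l p"
  unfolding cofactor_def
  by (rule arg_cong[where f = "\<lambda>A. (- 1) ^ (l + p) * det A"], rule eq_matI)
     (auto simp: mat_delete_def mat_of_fun_def replace_col_def)

lemma det_replace_col:
  assumes "p < r"
  shows "det_n r (replace_col X p u) = (\<Sum>l<r. u l * cofactor (mat_of_fun r X) l p)"
proof -
  have "mat_of_fun r (replace_col X p u) $$ (l, p) = u l" if "l < r" for l
    using that assms by (simp add: mat_of_fun_def replace_col_def)
  then show ?thesis
    by (simp add: det_n_eq_det laplace_expansion_column[OF mat_of_fun_carrier assms]
        cofactor_replace_col[OF assms])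
qed

lemma vec_mat_cofactor_expansion:
  assumes "i < r"
  shows "(\<Sum>k<r. vec_mat \<alpha> r X k * cofactor (mat_of_fun r X) i k) = \<alpha> i * det_n r X"
proof -
  let ?Z = "mat_of_fun r X"
  have row: "(\<Sum>k<r. X m k * cofactor ?Z i k) = (if m = i then det_n r X else 0)" if "m < r" for m
  proof -
    have "(\<Sum>k<r. X m k * cofactor ?Z i k) = (?Z * adj_mat ?Z) $$ (m, i)"
      using that assms
      by (simp add: index_mult_mat scalar_prod_def adj_mat_def mat_of_fun_def atLeast0LessThan)
    also have "\<dots> = (det_n r X \<cdot>\<^sub>m 1\<^sub>m r) $$ (m, i)"
      by (simp add: adj_mat(2)[OF mat_of_fun_carrier] det_n_eq_det)
    finally show ?thesis
      using that assms by simp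
  qed
  have "(\<Sum>k<r. vec_mat \<alpha> r X k * cofactor ?Z i k) = (\<Sum>k<r. \<Sum>m<r. \<alpha> m * (X m k * cofactor ?Z i k))"
    unfolding vec_mat_def by (simp add: sum_distrib_right mult.assoc)
  also have "\<dots> = (\<Sum>m<r. \<alpha> m * (\<Sum>k<r. X m k * cofactor ?Z i k))"
    by (subst sum.swap) (simp add: sum_distrib_left)
  also have "\<dots> = (\<Sum>m<r. if m = i then \<alpha> m * det_n r X else 0)"
    using row by (intro sum.cong) auto
  finally show ?thesis
    using assms by simp
qed

lemma cofactor_koszul_relation:
  assumes p: "p < r" and i: "i < r" and j: "j < r"
  shows "\<alpha> i * cofactor (mat_of_fun r X) j p - \<alpha> j * cofactor (mat_of_fun r X) i p
         \<in> ideal_gen (vec_mat \<alpha> r X ` ({..<r} - {p}))"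
proof -
  define Y where "Y = replace_col X p (\<lambda>m. of_bool (m = j))"
  let ?cof = "cofactor (mat_of_fun r Y) i"
  have "det_n r Y = cofactor (mat_of_fun r X) j p"
    unfolding Y_def det_replace_col[OF p] using j by simp
  moreover have "vec_mat \<alpha> r Y p = \<alpha> j"
    unfolding Y_def vec_mat_replace_col using j by simp
  moreover have "?cof p = cofactor (mat_of_fun r X) i p"
    unfolding Y_def by (rule cofactor_replace_col[OF p])
  moreover have "(\<Sum>k<r. vec_mat \<alpha> r Y k * ?cof k)
      = vec_mat \<alpha> r Y p * ?cof p + (\<Sum>k\<in>{..<r} - {p}. vec_mat \<alpha> r X k * ?cof k)"
    using p by (simp add: sum.remove Y_def vec_mat_replace_col)
  ultimately have "\<alpha> i * cofactor (mat_of_fun r X) j p - \<alpha> j * cofactor (mat_of_fun r X) i p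
      = (\<Sum>k\<in>{..<r} - {p}. vec_mat \<alpha> r X k * ?cof k)"
    using vec_mat_cofactor_expansion[OF i, of \<alpha> Y] by (simp add: algebra_simps)
  also have "\<dots> \<in> ideal_gen (vec_mat \<alpha> r X ` ({..<r} - {p}))"
    by (intro ideal_sum[OF ideal_gen_is_ideal] ideal_mult_right[OF ideal_gen_is_ideal]
        generator_in_ideal_gen) auto
  finally show ?thesis .
qed

section \<open>Syzygies of a regular sequence\<close>

definition weakly_regular :: "(nat \<Rightarrow> 'b::comm_ring_1) \<Rightarrow> nat \<Rightarrow> bool" where
  "weakly_regular \<alpha> r \<longleftrightarrow>
     (\<forall>i<r. \<forall>x. \<alpha> i * x \<in> ideal_gen (\<alpha> ` {..<i}) \<longrightarrow> x \<in> ideal_gen (\<alpha> ` {..<i}))"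

lemma weakly_regular_if_regular_sequence: "regular_sequence a r \<Longrightarrow> weakly_regular a r"
  unfolding regular_sequence_def weakly_regular_def by blast

text \<open>This is the statement that the syzygies of a regular sequence are generated by the Koszul
  syzygies \<open>\<alpha>\<^sub>i e\<^sub>j - \<alpha>\<^sub>j e\<^sub>i\<close>, in the dual form needed below.\<close>
lemma weakly_regular_syzygy_pairing:
  fixes \<alpha> \<gamma> :: "nat \<Rightarrow> 'b::comm_ring_1"
  assumes J: "is_ideal J" and reg: "weakly_regular \<alpha> r"
    and koszul: "\<And>i j. i < r \<Longrightarrow> j < r \<Longrightarrow> \<alpha> i * \<gamma> j - \<alpha> j * \<gamma> i \<in> J"
    and syz: "(\<Sum>m<r. \<alpha> m * u m) = 0"
  shows "(\<Sum>l<r. u l * \<gamma> l) \<in> J"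
  using reg koszul syz
proof (induction r arbitrary: u)
  case 0
  then show ?case using J by (simp add: is_idealD)
next
  case (Suc q)
  have "\<alpha> q * u q = (\<Sum>m<q. \<alpha> m * (- u m))"
    using Suc.prems(3) by (simp add: sum_negf eq_neg_iff_add_eq_0 add.commute)
  then have "\<alpha> q * u q \<in> ideal_gen (\<alpha> ` {..<q})"
    unfolding ideal_gen_image_lessThan by (intro CollectI exI)
  then have "u q \<in> ideal_gen (\<alpha> ` {..<q})"
    using Suc.prems(1) unfolding weakly_regular_def by blast
  then obtain h where h: "u q = (\<Sum>m<q. \<alpha> m * h m)"
    unfolding ideal_gen_image_lessThan by blast
  \<comment> \<open>subtract the Koszul syzygy \<open>\<Sum>\<^sub>m h\<^sub>m (\<alpha>\<^sub>q e\<^sub>m - \<alpha>\<^sub>m e\<^sub>q)\<close>, which kills the last entry\<close>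
  define u' where "u' m = u m + \<alpha> q * h m" for m
  have "(\<Sum>m<q. \<alpha> m * u' m) = (\<Sum>m<Suc q. \<alpha> m * u m)"
    using h by (simp add: u'_def distrib_left sum.distrib sum_distrib_left algebra_simps)
  then have IH: "(\<Sum>l<q. u' l * \<gamma> l) \<in> J"
    using Suc.prems by (intro Suc.IH) (auto simp: weakly_regular_def)
  have "(\<Sum>l<q. u' l * \<gamma> l) - (\<Sum>l<q. h l * (\<alpha> q * \<gamma> l - \<alpha> l * \<gamma> q))
      = (\<Sum>l<q. u l * \<gamma> l + \<gamma> q * (\<alpha> l * h l))"
    unfolding u'_def sum_subtractf[symmetric] by (rule sum.cong) (auto simp: algebra_simps)
  also have "\<dots> = (\<Sum>l<Suc q. u l * \<gamma> l)"
    by (simp add: h sum.distrib sum_distrib_left mult_ac)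
  moreover have "(\<Sum>l<q. h l * (\<alpha> q * \<gamma> l - \<alpha> l * \<gamma> q)) \<in> J"
    using Suc.prems(2) by (intro ideal_sum[OF J] is_idealD(3)[OF J]) auto
  ultimately show ?case
    using IH ideal_diff[OF J] by metis
qed

lemma det_replace_col_syzygy:
  assumes reg: "weakly_regular \<alpha> r" and p: "p < r" and syz: "(\<Sum>i<r. \<alpha> i * z i) = 0"
  shows "det_n r (replace_col X p z) \<in> ideal_gen (vec_mat \<alpha> r X ` ({..<r} - {p}))"
  unfolding det_replace_col[OF p]
  by (rule weakly_regular_syzygy_pairing[OF ideal_gen_is_ideal reg cofactor_koszul_relation[OF p] syz])

lemma lookup_const_mult: "Poly_Mapping.lookup (const c * p) k = c * Poly_Mapping.lookup p k"
  unfolding const_def mult_map_scale_conv_mult[symmetric] by transfer (simp add: when_def)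

lemma sum_single_lookup: "(\<Sum>k\<in>Poly_Mapping.keys x. Poly_Mapping.single k (Poly_Mapping.lookup x k)) = x"
  by (rule poly_mapping_eqI) (simp add: lookup_sum lookup_single when_def in_keys_iff)

lemma mem_ideal_gen_const_iff:
  fixes a :: "nat \<Rightarrow> 'a::comm_ring_1" and x :: "('v, 'a) mpoly"
  shows "x \<in> ideal_gen ((\<lambda>i. const (a i)) ` {..<q}) \<longleftrightarrow>
     (\<forall>k. Poly_Mapping.lookup x k \<in> ideal_gen (a ` {..<q}))"
proof
  assume "x \<in> ideal_gen ((\<lambda>i. const (a i)) ` {..<q})"
  then obtain h where "x = (\<Sum>m<q. const (a m) * h m)"
    unfolding ideal_gen_image_lessThan by blast
  then have coeff: "Poly_Mapping.lookup x k = (\<Sum>m<q. a m * Poly_Mapping.lookup (h m) k)" for k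
    by (simp add: lookup_sum lookup_const_mult)
  show "\<forall>k. Poly_Mapping.lookup x k \<in> ideal_gen (a ` {..<q})"
    unfolding ideal_gen_image_lessThan by (intro allI CollectI exI) (rule coeff)
next
  assume coeffs: "\<forall>k. Poly_Mapping.lookup x k \<in> ideal_gen (a ` {..<q})"
  have "Poly_Mapping.single k (Poly_Mapping.lookup x k) \<in> ideal_gen ((\<lambda>i. const (a i)) ` {..<q})" for k
  proof -
    obtain h where "Poly_Mapping.lookup x k = (\<Sum>m<q. a m * h m)"
      using coeffs unfolding ideal_gen_image_lessThan by blast
    then have "Poly_Mapping.single k (Poly_Mapping.lookup x k)
        = (\<Sum>m<q. const (a m) * Poly_Mapping.single k (h m))"
      by (intro poly_mapping_eqI) (simp add: lookup_sum lookup_const_mult lookup_single when_def)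
    then show ?thesis
      unfolding ideal_gen_image_lessThan by (intro CollectI exI)
  qed
  then show "x \<in> ideal_gen ((\<lambda>i. const (a i)) ` {..<q})"
    by (subst sum_single_lookup[symmetric]) (intro ideal_sum[OF ideal_gen_is_ideal])
qed

lemma weakly_regular_const:
  assumes "weakly_regular a r"
  shows "weakly_regular (\<lambda>i. const (a i) :: ('v, 'a::comm_ring_1) mpoly) r"
  using assms unfolding weakly_regular_def
  by (simp add: mem_ideal_gen_const_iff[where 'v='v] lookup_const_mult)

section \<open>Comparing ideals of maximal minors\<close>

lemma minor_in_minors_ideal:
  assumes "\<And>k. k < r \<Longrightarrow> c k < n"
  shows "det_n r (\<lambda>i k. M i (c k)) \<in> minors_ideal r M n"
  unfolding minors_ideal_def using assms by (intro generator_in_ideal_gen) blast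

lemma det_mem_if_vec_mat_cols:
  fixes \<alpha> :: "nat \<Rightarrow> 'b::comm_ring_1"
  assumes reg: "weakly_regular \<alpha> r"
    and cols: "\<forall>k<r. vec_mat \<alpha> r X k \<in> ideal_gen (vec_mat \<alpha> r M ` {..<n})"
    and leading: "\<forall>k<p. \<exists>j<n. \<forall>i<r. X i k = M i j"
  shows "det_n r X \<in> ideal_gen (ideal_gen (vec_mat \<alpha> r M ` {..<n}) \<union> minors_ideal r M n)"
  using cols leading
proof (induction "r - p" arbitrary: p X)
  case 0
  then obtain c where "\<And>k. k < r \<Longrightarrow> c k < n \<and> (\<forall>i<r. X i k = M i (c k))"
    by (metis diff_is_0_eq less_le_trans)
  then have "det_n r X \<in> minors_ideal r M n"
    using det_n_cong[of r X "\<lambda>i k. M i (c k)"] minor_in_minors_ideal[of r c n M] by auto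
  then show ?case
    by (blast intro: generator_in_ideal_gen)
next
  case (Suc d)
  let ?A = "ideal_gen (vec_mat \<alpha> r M ` {..<n})"
  let ?T = "ideal_gen (?A \<union> minors_ideal r M n)"
  have p: "p < r" and d: "d = r - Suc p"
    using Suc.hyps by arith+
  obtain h where h: "vec_mat \<alpha> r X p = (\<Sum>j<n. vec_mat \<alpha> r M j * h j)"
    using Suc.prems(1) p unfolding ideal_gen_image_lessThan by blast
  define z where "z i = X i p - (\<Sum>j<n. h j * M i j)" for i
  have syz: "(\<Sum>i<r. \<alpha> i * z i) = 0"
    using h by (simp add: z_def vec_mat_def right_diff_distrib sum_subtractf sum_distrib_left
        sum_distrib_right mult_ac sum.swap[of _ "{..<n}"])
  have det_X: "det_n r X = (\<Sum>j<n. h j * det_n r (replace_col X p (\<lambda>i. M i j)))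
      + det_n r (replace_col X p z)"
    by (subst replace_col_self[symmetric, of X p])
       (simp add: det_replace_col[OF p] z_def algebra_simps sum_distrib_left sum_distrib_right
         sum_subtractf sum.swap[of _ "{..<n}"])
  have "det_n r (replace_col X p (\<lambda>i. M i j)) \<in> ?T" if "j < n" for j
  proof (rule Suc.hyps(1)[OF d])
    show "\<forall>k<r. vec_mat \<alpha> r (replace_col X p (\<lambda>i. M i j)) k \<in> ?A"
      using Suc.prems(1) that
      by (auto simp: vec_mat_replace_col vec_mat_def[symmetric] intro: generator_in_ideal_gen)
    show "\<forall>k<Suc p. \<exists>j'<n. \<forall>i<r. replace_col X p (\<lambda>i. M i j) i k = M i j'"
      using Suc.prems(2) that by (auto simp: replace_col_def less_Suc_eq)
  qed
  moreover have "det_n r (replace_col X p z) \<in> ?T"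
  proof -
    have "ideal_gen (vec_mat \<alpha> r X ` ({..<r} - {p})) \<subseteq> ?A"
      using Suc.prems(1) by (intro ideal_gen_least ideal_gen_is_ideal) auto
    then show ?thesis
      using det_replace_col_syzygy[OF reg p syz] by (blast intro: generator_in_ideal_gen)
  qed
  ultimately show ?case
    unfolding det_X
    by (intro is_idealD(2)[OF ideal_gen_is_ideal] ideal_sum[OF ideal_gen_is_ideal]
        is_idealD(3)[OF ideal_gen_is_ideal]) auto
qed

lemma minors_ideal_subset_if_vec_mat_cols:
  fixes \<alpha> :: "nat \<Rightarrow> 'b::comm_ring_1"
  assumes reg: "weakly_regular \<alpha> r"
    and cols: "\<forall>k<n'. vec_mat \<alpha> r M' k \<in> ideal_gen (vec_mat \<alpha> r M ` {..<n})"
  shows "minors_ideal r M' n' \<subseteq> ideal_gen (ideal_gen (vec_mat \<alpha> r M ` {..<n}) \<union> minors_ideal r M n)"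
  unfolding minors_ideal_def[of r M' n']
proof (intro ideal_gen_least[OF ideal_gen_is_ideal] subsetI)
  fix x assume "x \<in> {det_n r (\<lambda>i k. M' i (c k)) |c. c ` {..<r} \<subseteq> {..<n'}}"
  then obtain c where "x = det_n r (\<lambda>i k. M' i (c k))" and "c ` {..<r} \<subseteq> {..<n'}"
    by blast
  then show "x \<in> ideal_gen (ideal_gen (vec_mat \<alpha> r M ` {..<n}) \<union> minors_ideal r M n)"
    using cols det_mem_if_vec_mat_cols[OF reg, of "\<lambda>i k. M' i (c k)" M n 0]
    by (auto simp: vec_mat_def)
qed

lemma a_times_eq_vec_mat: "a_times a r M = vec_mat (\<lambda>i. const (a i)) r M"
  by (auto simp: fun_eq_iff a_times_def vec_mat_def)

lemma a_ideal_subset_ideal_a: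
  fixes M :: "nat \<Rightarrow> nat \<Rightarrow> ('v, 'a::comm_ring_1) mpoly"
  shows "a_ideal a r M n \<subseteq> ideal_a a r"
  unfolding a_ideal_def ideal_a_def a_times_def
  by (intro ideal_gen_least ideal_gen_is_ideal image_subsetI ideal_sum[OF ideal_gen_is_ideal]
      ideal_mult_right[OF ideal_gen_is_ideal] generator_in_ideal_gen imageI) simp

lemma a_ideal_plus_minors_subset:
  assumes reg: "weakly_regular a r" and same: "a_ideal a r B' n' = a_ideal a r B n"
  shows "ideal_gen (a_ideal a r B' n' \<union> minors_ideal r B' n')
    \<subseteq> ideal_gen (a_ideal a r B n \<union> minors_ideal r B n)"
proof -
  let ?\<alpha> = "\<lambda>i. const (a i)"
  have "\<forall>k<n'. vec_mat ?\<alpha> r B' k \<in> ideal_gen (vec_mat ?\<alpha> r B ` {..<n})"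
  proof (intro allI impI)
    fix k assume "k < n'"
    then have "vec_mat ?\<alpha> r B' k \<in> ideal_gen (vec_mat ?\<alpha> r B' ` {..<n'})"
      by (intro generator_in_ideal_gen) simp
    then show "vec_mat ?\<alpha> r B' k \<in> ideal_gen (vec_mat ?\<alpha> r B ` {..<n})"
      using same by (simp add: a_ideal_def a_times_eq_vec_mat)
  qed
  then have "minors_ideal r B' n' \<subseteq> ideal_gen (a_ideal a r B n \<union> minors_ideal r B n)"
    unfolding a_ideal_def a_times_eq_vec_mat
    by (rule minors_ideal_subset_if_vec_mat_cols[OF weakly_regular_const[OF reg]])
  then show ?thesis
    using same by (intro ideal_gen_least ideal_gen_is_ideal) (auto intro: generator_in_ideal_gen)
qed

lemma a_ideal_plus_minors_eq:
  assumes "weakly_regular a r" and "a_ideal a r B n = a_ideal a r B' n'"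
  shows "ideal_gen (a_ideal a r B n \<union> minors_ideal r B n) = ideal_gen (a_ideal a r B' n' \<union> minors_ideal r B' n')"
  using a_ideal_plus_minors_subset[OF assms(1)] assms(2) by (metis subset_antisym)

lemma jd_step_minors_ideal_mono:
  assumes "jd_step a r M n M' n'"
  shows "minors_ideal r M n \<subseteq> minors_ideal r M' n'"
  unfolding minors_ideal_def
proof (intro ideal_gen_mono subsetI)
  have "n \<le> n'" and same: "\<And>i k. i < r \<Longrightarrow> k < n \<Longrightarrow> M' i k = M i k"
    using assms unfolding jd_step_def by auto
  fix x assume "x \<in> {det_n r (\<lambda>i k. M i (c k)) |c. c ` {..<r} \<subseteq> {..<n}}"
  then obtain c where x: "x = det_n r (\<lambda>i k. M i (c k))" and c: "c ` {..<r} \<subseteq> {..<n}"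
    by blast
  have "x = det_n r (\<lambda>i k. M' i (c k))"
    unfolding x using c same by (intro det_n_cong) auto
  then show "x \<in> {det_n r (\<lambda>i k. M' i (c k)) |c. c ` {..<r} \<subseteq> {..<n'}}"
    using c \<open>n \<le> n'\<close> by force
qed

lemma jd_step_a_ideal:
  assumes "jd_step a r M n M' n'"
  shows "a_ideal a r M' n' = ideal_gen (a_ideal a r M n \<union> minors_ideal r M n) \<inter> ideal_a a r"
proof -
  have "n \<le> n'" and same: "\<And>i k. i < r \<Longrightarrow> k < n \<Longrightarrow> M' i k = M i k"
    and new_cols: "ideal_gen (a_ideal a r M n \<union> (minors_ideal r M n \<inter> ideal_a a r))
       = ideal_gen (a_ideal a r M n \<union> a_times a r M' ` {n..<n'})"
    using assms unfolding jd_step_def by auto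
  have "a_times a r M' ` {..<n} = a_times a r M ` {..<n}"
    unfolding a_times_def using same by (intro image_cong refl sum.cong) auto
  moreover have "{..<n'} = {..<n} \<union> {n..<n'}"
    using \<open>n \<le> n'\<close> by auto
  ultimately have "a_times a r M' ` {..<n'} = a_times a r M ` {..<n} \<union> a_times a r M' ` {n..<n'}"
    by (simp add: image_Un)
  then have "a_ideal a r M' n' = ideal_gen (a_ideal a r M n \<union> a_times a r M' ` {n..<n'})"
    unfolding a_ideal_def ideal_gen_Un_ideal_gen by simp
  also have "\<dots> = ideal_gen (a_ideal a r M n \<union> (minors_ideal r M n \<inter> ideal_a a r))"
    by (rule new_cols[symmetric])
  also have "\<dots> = ideal_gen (a_ideal a r M n \<union> minors_ideal r M n) \<inter> ideal_a a r"
    unfolding a_ideal_def minors_ideal_def ideal_a_def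
    by (rule ideal_gen_Un_Int_modular[symmetric])
       (simp_all add: ideal_gen_is_ideal a_ideal_subset_ideal_a[unfolded a_ideal_def ideal_a_def])
  finally show ?thesis .
qed

lemma iterated_jd_ge_1: "iterated_jd \<phi> s a r i B n \<Longrightarrow> i \<ge> 1"
  by (induction rule: iterated_jd.induct) auto

lemma jd_first_a_ideal: "jd_first \<phi> s a r B \<Longrightarrow> a_ideal a r B s = L_ideal \<phi> s"
  unfolding L_ideal_def a_ideal_def jd_first_def by (intro arg_cong[where f = ideal_gen] image_cong) auto

lemma jd_step_a_ideal_mono:
  assumes "jd_step a r M n M' n'"
  shows "a_ideal a r M n \<subseteq> a_ideal a r M' n'"
  unfolding jd_step_a_ideal[OF assms]
  using a_ideal_subset_ideal_a[of a r M n] by (auto intro: generator_in_ideal_gen)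

lemma iterated_jd_L_subset_a_ideal:
  "iterated_jd \<phi> s a r i B n \<Longrightarrow> L_ideal \<phi> s \<subseteq> a_ideal a r B n"
proof (induction rule: iterated_jd.induct)
  case (first B)
  then show ?case by (simp add: jd_first_a_ideal)
next
  case (step i B n B' n')
  then show ?case using jd_step_a_ideal_mono by blast
qed

lemma iterated_jd_a_ideal_subset:
  "iterated_jd \<phi> s a r i B n \<Longrightarrow> a_ideal a r B n \<subseteq> ideal_gen (L_ideal \<phi> s \<union> minors_ideal r B n)"
proof (induction rule: iterated_jd.induct)
  case (first B)
  then show ?case by (auto simp: jd_first_a_ideal intro: generator_in_ideal_gen)
next
  case (step i B n B' n')
  have minors: "minors_ideal r B n \<subseteq> minors_ideal r B' n'"
    by (rule jd_step_minors_ideal_mono[OF step.hyps(2)])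
  then have "ideal_gen (L_ideal \<phi> s \<union> minors_ideal r B n) \<subseteq> ideal_gen (L_ideal \<phi> s \<union> minors_ideal r B' n')"
    by (intro ideal_gen_mono) blast
  then have "ideal_gen (a_ideal a r B n \<union> minors_ideal r B n) \<subseteq> ideal_gen (L_ideal \<phi> s \<union> minors_ideal r B' n')"
    using step.IH minors by (intro ideal_gen_least ideal_gen_is_ideal) (blast intro: generator_in_ideal_gen)
  then show ?case
    unfolding jd_step_a_ideal[OF step.hyps(2)] by blast
qed

lemma iterated_jd_L_plus_minors:
  assumes "iterated_jd \<phi> s a r i B n"
  shows "ideal_gen (L_ideal \<phi> s \<union> minors_ideal r B n) = ideal_gen (a_ideal a r B n \<union> minors_ideal r B n)"
proof
  show "ideal_gen (L_ideal \<phi> s \<union> minors_ideal r B n) \<subseteq> ideal_gen (a_ideal a r B n \<union> minors_ideal r B n)"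
    using iterated_jd_L_subset_a_ideal[OF assms] by (intro ideal_gen_mono) auto
  show "ideal_gen (a_ideal a r B n \<union> minors_ideal r B n) \<subseteq> ideal_gen (L_ideal \<phi> s \<union> minors_ideal r B n)"
    using iterated_jd_a_ideal_subset[OF assms]
    by (intro ideal_gen_least ideal_gen_is_ideal) (auto intro: generator_in_ideal_gen)
qed

lemma iterated_jd_a_ideal_unique:
  assumes reg: "weakly_regular a r"
    and "iterated_jd \<phi> s a r i B n" and "iterated_jd \<phi> s a r i B' n'"
  shows "a_ideal a r B n = a_ideal a r B' n'"
  using assms(2,3)
proof (induction arbitrary: B' n' rule: iterated_jd.induct)
  case (first B)
  from first.prems show ?case
    by (cases rule: iterated_jd.cases) (auto simp: jd_first_a_ideal first.hyps dest: iterated_jd_ge_1)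
next
  case (step i B0 n0 B n)
  from step.prems obtain B0' n0' where B0': "iterated_jd \<phi> s a r i B0' n0'" "jd_step a r B0' n0' B' n'"
    using iterated_jd_ge_1[OF step.hyps(1)] by (cases rule: iterated_jd.cases) auto
  have "a_ideal a r B0 n0 = a_ideal a r B0' n0'"
    by (rule step.IH[OF B0'(1)])
  then have "ideal_gen (a_ideal a r B0 n0 \<union> minors_ideal r B0 n0)
      = ideal_gen (a_ideal a r B0' n0' \<union> minors_ideal r B0' n0')"
    by (rule a_ideal_plus_minors_eq[OF reg])
  then show ?case
    unfolding jd_step_a_ideal[OF step.hyps(2)] jd_step_a_ideal[OF B0'(2)] by simp
qed

theorem theorem4p5:
  fixes \<phi> :: "'v::finite \<Rightarrow> nat \<Rightarrow> 'a::comm_ring_1"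
    and s r :: nat
    and a :: "nat \<Rightarrow> 'a"
  assumes noeth: "noetherian_ring TYPE('a)"
    and I1: "\<forall>v. \<forall>k<s. \<phi> v k \<in> ideal_gen (a ` {..<r})"
    and reg: "regular_sequence a r"
  shows "\<forall>i\<ge>1. \<forall>B n B' n'.
           iterated_jd \<phi> s a r i B n \<longrightarrow> iterated_jd \<phi> s a r i B' n' \<longrightarrow>
           ideal_gen (L_ideal \<phi> s \<union> minors_ideal r B n)
             = ideal_gen (L_ideal \<phi> s \<union> minors_ideal r B' n')"
proof (intro allI impI)
  fix i B n B' n'
  assume B: "iterated_jd \<phi> s a r i B n" and B': "iterated_jd \<phi> s a r i B' n'"
  have reg': "weakly_regular a r"
    using reg by (rule weakly_regular_if_regular_sequence)
  have "a_ideal a r B n = a_ideal a r B' n'"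
    using iterated_jd_a_ideal_unique[OF reg' B B'] .
  then have "ideal_gen (a_ideal a r B n \<union> minors_ideal r B n)
      = ideal_gen (a_ideal a r B' n' \<union> minors_ideal r B' n')"
    by (rule a_ideal_plus_minors_eq[OF reg'])
  then show "ideal_gen (L_ideal \<phi> s \<union> minors_ideal r B n)
      = ideal_gen (L_ideal \<phi> s \<union> minors_ideal r B' n')"
    unfolding iterated_jd_L_plus_minors[OF B] iterated_jd_L_plus_minors[OF B'] .
qed

end
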